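(* Let $\mathcal C\subseteq\{0,1\}^n$ and $\mathcal D\subseteq\{0,1\}^m$ be neural codes, $\phi:R_\mathcal D\to R_\mathcal C$ a ring homomorphism, and $\tau:R[m]\to R[n]$ a ring homomorphism. Then $\tau$ is compatible with $\phi$ if and only if $q_\phi=q_\tau|_\mathcal C$, where $q_\tau:\{0,1\}^n\to\{0,1\}^m$ and $q_\phi:\mathcal C\to\mathcal D$ are the associated code maps.
   Context: For a code $\mathcal C\subseteq\{0,1\}^n$, $R_\mathcal C$ is the ring of all functions $\mathcal C\to\mathbb F_2$ (equivalently $\mathbb F_2[x_1,\dots,x_n]$ modulo the ideal of polynomials vanishing on $\mathcal C$); $R[n]=R_{\{0,1\}^n}$. $R_\mathcal C$ is an $R[n]$-module via $(r\cdot f)(c)=r(c)f(c)$. $\rho_d$ denotes the indicator function of $\{d\}$. For any ring homomorphism $\psi:R_\mathcal B\to R_\mathcal A$ between neural rings and any $a\in\mathcal A$ there is a unique $b\in\mathcal B$ with $\psi(\rho_b)(a)=1$; the associated code map $q_\psi:\mathcal A\to\mathcal B$ sends $a$ to this $b$ (this applies in particular to $\tau:R[m]\to R[n]$ with $\mathcal A=\{0,1\}^n$, $\mathcal B=\{0,1\}^m$). A ring homomorphism $\tau:R[m]\to R[n]$ is compatible with $\phi$ if $\phi(r\cdot f)=\tau(r)\cdot\phi(f)$ for all $r\in R[m]$ and $f\in R_\mathcal D$. *)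

theory Defs
  imports "HOL-Algebra.Ring" "HOL-Algebra.RingHom"
begin

text \<open>Codewords in {0,1}^n are boolean lists of length n; F_2 is modelled by bool
  (addition = xor, multiplication = conjunction).\<close>

definition cube :: "nat \<Rightarrow> bool list set" where
  "cube n = {xs. length xs = n}"

text \<open>The neural ring R_C: all functions C \<rightarrow> F_2, represented extensionally
  (value False outside C).\<close>
definition neural_ring :: "bool list set \<Rightarrow> (bool list \<Rightarrow> bool) ring" where
  "neural_ring C = \<lparr> carrier = {f. \<forall>x. x \<notin> C \<longrightarrow> f x = False},
                     mult = (\<lambda>f g x. f x \<and> g x),
                     one = (\<lambda>x. x \<in> C),
                     zero = (\<lambda>x. False),
                     add = (\<lambda>f g x. f x \<noteq> g x) \<rparr>"

definition rho :: "bool list \<Rightarrow> bool list \<Rightarrow> bool" where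
  "rho d = (\<lambda>x. x = d)"

definition code_map ::
  "bool list set \<Rightarrow> bool list set \<Rightarrow> ((bool list \<Rightarrow> bool) \<Rightarrow> (bool list \<Rightarrow> bool))
     \<Rightarrow> bool list \<Rightarrow> bool list" where
  "code_map A B psi a = (THE b. b \<in> B \<and> psi (rho b) a)"

definition module_act :: "(bool list \<Rightarrow> bool) \<Rightarrow> (bool list \<Rightarrow> bool) \<Rightarrow> bool list \<Rightarrow> bool" where
  "module_act r f = (\<lambda>c. r c \<and> f c)"

definition compatible ::
  "nat \<Rightarrow> bool list set \<Rightarrow> ((bool list \<Rightarrow> bool) \<Rightarrow> (bool list \<Rightarrow> bool))
     \<Rightarrow> ((bool list \<Rightarrow> bool) \<Rightarrow> (bool list \<Rightarrow> bool)) \<Rightarrow> bool" where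
  "compatible m D tau phi \<longleftrightarrow>
     (\<forall>r \<in> carrier (neural_ring (cube m)). \<forall>f \<in> carrier (neural_ring D).
        phi (module_act r f) = module_act (tau r) (phi f))"

end

theory Submission
  imports Defs
begin

text \<open>A ring homomorphism \<open>\<psi> : R\<^sub>B \<rightarrow> R\<^sub>A\<close> sends the orthogonal idempotents \<open>\<rho>\<^sub>b\<close>
  to orthogonal idempotents summing to \<open>1 = \<Sum>\<^sub>b \<rho>\<^sub>b\<close>; hence each \<open>a \<in> A\<close> lies in the support
  of exactly one \<open>\<psi> \<rho>\<^sub>b\<close>, and \<open>\<psi>\<close> is pullback along \<open>q\<^sub>\<psi>\<close>:
  \<open>\<psi> f a = f (q\<^sub>\<psi> a)\<close>. Both sides of the compatibility equation therefore vanish off \<open>C\<close>,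
  and at \<open>c \<in> C\<close> they read \<open>r (q\<^sub>\<phi> c) \<and> f (q\<^sub>\<phi> c)\<close> and \<open>r (q\<^sub>\<tau> c) \<and> f (q\<^sub>\<phi> c)\<close>. These agree
  for all \<open>r, f\<close> iff \<open>q\<^sub>\<phi> c = q\<^sub>\<tau> c\<close>: take \<open>r = \<rho>\<^bsub>q\<^sub>\<phi> c\<^esub>\<close> and \<open>f = 1\<close>.\<close>

lemma neural_ring_simps [simp]:
  "carrier (neural_ring C) = {f. \<forall>x. x \<notin> C \<longrightarrow> f x = False}"
  "mult (neural_ring C) = (\<lambda>f g x. f x \<and> g x)"
  "one (neural_ring C) = (\<lambda>x. x \<in> C)"
  "zero (neural_ring C) = (\<lambda>x. False)"
  "add (neural_ring C) = (\<lambda>f g x. f x \<noteq> g x)"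
  by (simp_all add: neural_ring_def)

lemma rho_in_carrier: "b \<in> B \<Longrightarrow> rho b \<in> carrier (neural_ring B)"
  by (auto simp: rho_def)

lemma module_act_in_carrier:
  "f \<in> carrier (neural_ring D) \<Longrightarrow> module_act r f \<in> carrier (neural_ring D)"
  by (simp add: module_act_def)

lemma finite_cube: "finite (cube m)"
  unfolding cube_def using finite_lists_length_eq[of "UNIV :: bool set" m] by simp

lemma finite_subset_cube: "D \<subseteq> cube m \<Longrightarrow> finite D"
  using finite_cube finite_subset by blast

context
  fixes psi and A B :: "bool list set"
  assumes hom: "psi \<in> ring_hom (neural_ring B) (neural_ring A)"
begin

lemma neural_ring_hom_add:
  "f \<in> carrier (neural_ring B) \<Longrightarrow> g \<in> carrier (neural_ring B) \<Longrightarrow>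
     psi (\<lambda>x. f x \<noteq> g x) = (\<lambda>x. psi f x \<noteq> psi g x)"
  using ring_hom_add[OF hom] by simp

lemma neural_ring_hom_mult:
  "f \<in> carrier (neural_ring B) \<Longrightarrow> g \<in> carrier (neural_ring B) \<Longrightarrow>
     psi (\<lambda>x. f x \<and> g x) = (\<lambda>x. psi f x \<and> psi g x)"
  using ring_hom_mult[OF hom] by simp

lemma neural_ring_hom_one: "psi (\<lambda>x. x \<in> B) = (\<lambda>x. x \<in> A)"
  using ring_hom_one[OF hom] by simp

lemma neural_ring_hom_zero: "psi (\<lambda>x. False) = (\<lambda>x. False)"
proof -
  have "(\<lambda>x::bool list. False) \<in> carrier (neural_ring B)" by simp
  from neural_ring_hom_add[OF this this] show ?thesis by (metis (full_types))
qed

lemma neural_ring_hom_outside: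
  "f \<in> carrier (neural_ring B) \<Longrightarrow> a \<notin> A \<Longrightarrow> \<not> psi f a"
  using ring_hom_closed[OF hom] by simp

lemma neural_ring_hom_support_rho:
  assumes f: "f \<in> carrier (neural_ring B)" and b: "b \<in> B" and a: "psi (rho b) a"
  shows "psi f a \<longleftrightarrow> f b"
proof -
  have "(\<lambda>x. f x \<and> rho b x) = (if f b then rho b else (\<lambda>x. False))"
    by (auto simp: rho_def)
  then have "psi (\<lambda>x. f x \<and> rho b x) = (if f b then psi (rho b) else (\<lambda>x. False))"
    using neural_ring_hom_zero by simp
  with neural_ring_hom_mult[OF f rho_in_carrier[OF b]] a show ?thesis
    by (metis (full_types))
qed

lemma neural_ring_hom_indicator:
  assumes "finite S" and "S \<subseteq> B"
  shows "psi (\<lambda>x. x \<in> S) a \<longleftrightarrow> (\<exists>b\<in>S. psi (rho b) a)"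
  using assms
proof (induction S rule: finite_induct)
  case empty
  then show ?case using neural_ring_hom_zero by simp
next
  case (insert b S)
  have S: "(\<lambda>x. x \<in> S) \<in> carrier (neural_ring B)" and b: "b \<in> B"
    using insert.prems by auto
  have "(\<lambda>x. x \<in> insert b S) = (\<lambda>x. (x \<in> S) \<noteq> rho b x)"
    using insert.hyps(2) by (auto simp: rho_def)
  then have "psi (\<lambda>x. x \<in> insert b S) a \<longleftrightarrow> psi (\<lambda>x. x \<in> S) a \<noteq> psi (rho b) a"
    using neural_ring_hom_add[OF S rho_in_carrier[OF b]] by metis
  moreover have "\<not> (psi (\<lambda>x. x \<in> S) a \<and> psi (rho b) a)"
    using neural_ring_hom_support_rho[OF S b] insert.hyps(2) by auto
  ultimately show ?case using insert by auto
qed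

lemma neural_ring_hom_ex1_rho:
  assumes "finite B" and "a \<in> A"
  shows "\<exists>!b. b \<in> B \<and> psi (rho b) a"
proof -
  have "psi (\<lambda>x. x \<in> B) a" using neural_ring_hom_one assms(2) by simp
  then obtain b where b: "b \<in> B" "psi (rho b) a"
    using neural_ring_hom_indicator[OF assms(1) subset_refl] by auto
  have "b' = b" if "b' \<in> B" "psi (rho b') a" for b'
    using neural_ring_hom_support_rho[OF rho_in_carrier[OF that(1)] b] that(2)
    by (simp add: rho_def)
  with b show ?thesis by blast
qed

lemma code_map_mem:
  assumes "finite B" and "a \<in> A"
  shows "code_map A B psi a \<in> B" and "psi (rho (code_map A B psi a)) a"
  using theI'[OF neural_ring_hom_ex1_rho[OF assms]] by (simp_all add: code_map_def)

lemma neural_ring_hom_eval: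
  assumes "finite B" and "a \<in> A" and "f \<in> carrier (neural_ring B)"
  shows "psi f a = f (code_map A B psi a)"
  using neural_ring_hom_support_rho[OF assms(3) code_map_mem[OF assms(1,2)]] by simp

end

context
  fixes n m :: nat and C D :: "bool list set" and phi tau
  assumes C: "C \<subseteq> cube n" and D: "D \<subseteq> cube m"
    and phi: "phi \<in> ring_hom (neural_ring D) (neural_ring C)"
    and tau: "tau \<in> ring_hom (neural_ring (cube m)) (neural_ring (cube n))"
begin

lemma code_map_eq_if_compatible:
  assumes comp: "compatible m D tau phi" and c: "c \<in> C"
  shows "code_map C D phi c = code_map (cube n) (cube m) tau c"
proof -
  let ?d = "code_map C D phi c"
  have d: "?d \<in> D" using code_map_mem(1)[OF phi finite_subset_cube[OF D] c] .
  have r: "rho ?d \<in> carrier (neural_ring (cube m))" using d D rho_in_carrier by blast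
  have one: "(\<lambda>x. x \<in> D) \<in> carrier (neural_ring D)" by simp
  have "phi (module_act (rho ?d) (\<lambda>x. x \<in> D)) c = module_act (tau (rho ?d)) (phi (\<lambda>x. x \<in> D)) c"
    using comp r one unfolding compatible_def by simp
  then have "tau (rho ?d) c"
    using neural_ring_hom_eval[OF phi finite_subset_cube[OF D] c] module_act_in_carrier[OF one] d
    by (simp add: module_act_def rho_def)
  then show ?thesis
    using neural_ring_hom_eval[OF tau finite_cube _ r] C c by (auto simp: rho_def)
qed

lemma compatible_if_code_map_eq:
  assumes eq: "\<forall>c \<in> C. code_map C D phi c = code_map (cube n) (cube m) tau c"
  shows "compatible m D tau phi"
  unfolding compatible_def
proof (intro ballI ext)
  fix r f x
  assume r: "r \<in> carrier (neural_ring (cube m))" and f: "f \<in> carrier (neural_ring D)"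
  note rf = module_act_in_carrier[OF f]
  show "phi (module_act r f) x = module_act (tau r) (phi f) x"
  proof (cases "x \<in> C")
    case True
    then show ?thesis
      using neural_ring_hom_eval[OF phi finite_subset_cube[OF D] True] C
        neural_ring_hom_eval[OF tau finite_cube _ r] eq rf f
      by (auto simp: module_act_def)
  next
    case False
    then show ?thesis
      using neural_ring_hom_outside[OF phi rf] neural_ring_hom_outside[OF phi f]
      by (simp add: module_act_def)
  qed
qed

end

theorem corollary2:
  fixes n m :: nat and C D :: "bool list set"
    and phi tau :: "(bool list \<Rightarrow> bool) \<Rightarrow> (bool list \<Rightarrow> bool)"
  assumes "C \<subseteq> cube n" and "D \<subseteq> cube m"
    and "phi \<in> ring_hom (neural_ring D) (neural_ring C)"
    and "tau \<in> ring_hom (neural_ring (cube m)) (neural_ring (cube n))"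
  shows "compatible m D tau phi \<longleftrightarrow>
         (\<forall>c \<in> C. code_map C D phi c = code_map (cube n) (cube m) tau c)"
  using code_map_eq_if_compatible[OF assms] compatible_if_code_map_eq[OF assms] by blast

end
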